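(* For every integer $n\geq 3$ and every $m\in\{3,6,9,\dots,3n-6\}$ there exists a planar graph $G$ with $n$ vertices and $m$ edges such that $c(G)=n+\frac{7}{3}m-2$.
   Context: All graphs are finite, simple and undirected. A clique of a graph $G$ is a (possibly empty) set of pairwise adjacent vertices; $c(G)$ denotes the number of cliques of $G$ (including the empty clique, all single vertices and all edges). *)

theory Defs
  imports "HOL-Analysis.Analysis"
begin

definition simple_graph :: "'a set \<Rightarrow> 'a set set \<Rightarrow> bool" where
  "simple_graph V E \<longleftrightarrow> finite V \<and>
     (\<forall>e\<in>E. \<exists>u v. u \<in> V \<and> v \<in> V \<and> u \<noteq> v \<and> e = {u, v})"

text \<open>Cliques: (possibly empty) sets of pairwise adjacent vertices.\<close>

definition cliques :: "'a set \<Rightarrow> 'a set set \<Rightarrow> 'a set set" where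
  "cliques V E = {C. C \<subseteq> V \<and> (\<forall>u\<in>C. \<forall>v\<in>C. u \<noteq> v \<longrightarrow> {u, v} \<in> E)}"

definition num_cliques :: "'a set \<Rightarrow> 'a set set \<Rightarrow> nat" where
  "num_cliques V E = card (cliques V E)"

definition planar_graph :: "'a set \<Rightarrow> 'a set set \<Rightarrow> bool" where
  "planar_graph V E \<longleftrightarrow>
     (\<exists>(pos :: 'a \<Rightarrow> complex) (\<gamma> :: 'a set \<Rightarrow> real \<Rightarrow> complex).
        inj_on pos V \<and>
        (\<forall>e\<in>E. arc (\<gamma> e) \<and> {pathstart (\<gamma> e), pathfinish (\<gamma> e)} = pos ` e \<and>
                 path_image (\<gamma> e) \<inter> pos ` V = pos ` e) \<and>
        (\<forall>e\<in>E. \<forall>e'\<in>E. e \<noteq> e' \<longrightarrow>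
                 path_image (\<gamma> e) \<inter> path_image (\<gamma> e') \<subseteq> pos ` (e \<inter> e')))"

end

theory Submission
  imports Defs
begin

text \<open>The extremal graph is the join of an edge \<open>ab\<close> with a path on \<open>r = m/3\<close> vertices,
  padded with isolated vertices. It grows from the triangle on \<open>a\<close>, \<open>b\<close> and the first path
  vertex (3 edges, 8 cliques) by adding path vertices, each joined to the triangle formed by
  \<open>a\<close>, \<open>b\<close> and the previous path vertex, hence bringing 3 edges and \<open>2\<^sup>3 = 8\<close> cliques. This
  gives \<open>8r + (n - r - 2) = n + 7m/3 - 2\<close> cliques. Planarity is witnessed by the straight-line
  drawing with \<open>a, b\<close> at \<open>\<plusminus>i\<close> and the path on the real axis.\<close>

lemma finite_cliques: "finite V \<Longrightarrow> finite (cliques V E)"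
  unfolding cliques_def by (rule finite_subset[of _ "Pow V"]) auto

lemma cliques_insert_vertex:
  assumes "v \<notin> V" and "\<forall>e\<in>E. e \<subseteq> V" and K: "K \<in> cliques V E"
  shows "cliques (insert v V) (E \<union> (\<lambda>u. {v, u}) ` K) = cliques V E \<union> insert v ` Pow K"
    (is "cliques _ ?E = _")
proof (intro equalityI subsetI)
  fix C assume C: "C \<in> cliques (insert v V) ?E"
  show "C \<in> cliques V E \<union> insert v ` Pow K"
  proof (cases "v \<in> C")
    case False
    then have "C \<in> cliques V E"
      using C by (auto simp: cliques_def image_iff doubleton_eq_iff)
    then show ?thesis by blast
  next
    case True
    have "u \<in> K" if "u \<in> C" "u \<noteq> v" for u
    proof -
      have "{v, u} \<in> ?E" using C True that by (auto simp: cliques_def)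
      moreover have "{v, u} \<notin> E" using assms(1,2) by auto
      ultimately show ?thesis using that by (auto simp: doubleton_eq_iff)
    qed
    then have "C = insert v (C - {v})" "C - {v} \<in> Pow K" using True by auto
    then show ?thesis by blast
  qed
next
  fix C assume "C \<in> cliques V E \<union> insert v ` Pow K"
  then show "C \<in> cliques (insert v V) ?E"
  proof
    assume "C \<in> insert v ` Pow K"
    then obtain S where "S \<subseteq> K" "C = insert v S" by auto
    then show ?thesis using K by (auto simp: cliques_def insert_commute) (meson subsetD)
  qed (auto simp: cliques_def)
qed

lemma card_cliques_insert_vertex:
  assumes "finite V" "v \<notin> V" "\<forall>e\<in>E. e \<subseteq> V" "K \<in> cliques V E"
  shows "card (cliques (insert v V) (E \<union> (\<lambda>u. {v, u}) ` K)) = card (cliques V E) + 2 ^ card K"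
proof -
  have "K \<subseteq> V" using assms(4) by (simp add: cliques_def)
  then have "finite K" "v \<notin> K" using assms(1,2) finite_subset by auto
  then have "card (insert v ` Pow K) = 2 ^ card K"
    by (subst card_image) (auto simp: inj_on_def card_Pow)
  moreover have "cliques V E \<inter> insert v ` Pow K = {}"
    using assms(2) by (auto simp: cliques_def)
  ultimately show ?thesis
    using assms \<open>finite K\<close> by (simp add: cliques_insert_vertex card_Un_disjoint finite_cliques)
qed

lemma card_cliques_union_isolated:
  assumes "finite V" "finite W" "V \<inter> W = {}" "\<forall>e\<in>E. e \<subseteq> V"
  shows "card (cliques (V \<union> W) E) = card (cliques V E) + card W"
  using assms(2,3)
proof (induction W rule: finite_induct)
  case (insert w W)
  have "{} \<in> cliques (V \<union> W) E" by (simp add: cliques_def)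
  then have "card (cliques (insert w (V \<union> W)) (E \<union> (\<lambda>u. {w, u}) ` {}))
      = card (cliques (V \<union> W) E) + 1"
    using insert assms(1,4) by (subst card_cliques_insert_vertex) auto
  then show ?case using insert by simp
qed simp

lemma card_edges_insert_vertex:
  assumes "finite E" "v \<notin> V" "\<forall>e\<in>E. e \<subseteq> V" "K \<subseteq> V" "finite K"
  shows "card (E \<union> (\<lambda>u. {v, u}) ` K) = card E + card K"
proof -
  have "inj_on (\<lambda>u. {v, u}) K" using assms(2,4) by (auto simp: inj_on_def doubleton_eq_iff)
  moreover have "E \<inter> (\<lambda>u. {v, u}) ` K = {}" using assms(2,3) by auto
  ultimately show ?thesis using assms(1,5) by (simp add: card_Un_disjoint card_image)
qed

lemma simple_graph_edge_ordered:
  fixes V :: "'a::linorder set"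
  assumes "simple_graph V E" "e \<in> E"
  shows "\<exists>u v. u \<in> V \<and> v \<in> V \<and> u < v \<and> e = {u, v}"
proof -
  obtain u v where "u \<in> V" "v \<in> V" "u \<noteq> v" "e = {u, v}"
    using assms unfolding simple_graph_def by blast
  then show ?thesis by (metis insert_commute linorder_neqE)
qed

text \<open>A straight-line drawing is a plane drawing as soon as every point of an edge segment is
  either an endpoint or a non-vertex point from which \<open>edge_at\<close> recovers the edge: then two
  distinct edges can only share vertex images.\<close>

lemma planar_graph_straight_line:
  fixes V :: "'a::linorder set" and pos :: "'a \<Rightarrow> complex" and edge_at :: "complex \<Rightarrow> 'a set"
  assumes "simple_graph V E" and "inj_on pos V"
    and segment_points: "\<And>u v z. {u, v} \<in> E \<Longrightarrow> u < v \<Longrightarrow> z \<in> closed_segment (pos u) (pos v) \<Longrightarrow>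
           z \<in> pos ` {u, v} \<or> (z \<notin> pos ` V \<and> edge_at z = {u, v})"
  shows "planar_graph V E"
proof -
  define \<gamma> where "\<gamma> e = linepath (pos (Min e)) (pos (Max e))" for e :: "'a set"
  note edge = simple_graph_edge_ordered[OF \<open>simple_graph V E\<close>]
  have \<gamma>_eq: "\<gamma> {u, v} = linepath (pos u) (pos v)" if "u < v" for u v
    using that by (auto simp: \<gamma>_def min_def max_def)
  have on_edge: "z \<in> pos ` e \<or> (z \<notin> pos ` V \<and> edge_at z = e)"
    if e: "e \<in> E" and z: "z \<in> path_image (\<gamma> e)" for e z
  proof -
    obtain u v where "u < v" "e = {u, v}" using edge[OF e] by blast
    then show ?thesis using e z segment_points[of u v z] by (simp add: \<gamma>_eq)
  qed
  have vertex_on_edge: "k \<in> e" if e: "e \<in> E" and "k \<in> V" "pos k \<in> path_image (\<gamma> e)" for e k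
  proof -
    have "e \<subseteq> V" using edge[OF e] by blast
    then show ?thesis
      using on_edge[OF e \<open>pos k \<in> path_image (\<gamma> e)\<close>] \<open>k \<in> V\<close> \<open>inj_on pos V\<close>
      by (auto dest: inj_onD)
  qed
  show ?thesis
    unfolding planar_graph_def
  proof (intro exI conjI ballI impI subsetI)
    show "inj_on pos V" by fact
  next
    fix e assume "e \<in> E"
    then obtain u v where uv: "u \<in> V" "v \<in> V" "u < v" "e = {u, v}" using edge by blast
    moreover have "pos u \<noteq> pos v" using uv \<open>inj_on pos V\<close> by (auto dest: inj_onD)
    ultimately show "arc (\<gamma> e)" "{pathstart (\<gamma> e), pathfinish (\<gamma> e)} = pos ` e"
      by (simp_all add: \<gamma>_eq)
    show "path_image (\<gamma> e) \<inter> pos ` V = pos ` e"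
      using uv vertex_on_edge[OF \<open>e \<in> E\<close>] by (auto simp: \<gamma>_eq)
  next
    fix e e' z assume "e \<in> E" "e' \<in> E" "e \<noteq> e'" and z: "z \<in> path_image (\<gamma> e) \<inter> path_image (\<gamma> e')"
    have "z \<in> pos ` V"
    proof (rule ccontr)
      assume "z \<notin> pos ` V"
      moreover have "pos ` e \<subseteq> pos ` V" "pos ` e' \<subseteq> pos ` V"
        using edge \<open>e \<in> E\<close> \<open>e' \<in> E\<close> by blast+
      ultimately have "edge_at z = e" "edge_at z = e'"
        using on_edge[of e z] on_edge[of e' z] \<open>e \<in> E\<close> \<open>e' \<in> E\<close> z by blast+
      with \<open>e \<noteq> e'\<close> show False by simp
    qed
    then obtain k where "k \<in> V" "z = pos k" by blast
    then show "z \<in> pos ` (e \<inter> e')"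
      using vertex_on_edge[of e k] vertex_on_edge[of e' k] \<open>e \<in> E\<close> \<open>e' \<in> E\<close> z by blast
  qed
qed

definition double_fan :: "nat \<Rightarrow> nat set set" where
  "double_fan r = insert {0, 1}
     ((\<lambda>j. {0, j}) ` {2..r + 1} \<union> (\<lambda>j. {1, j}) ` {2..r + 1} \<union> (\<lambda>j. {j, Suc j}) ` {2..r})"

lemma double_fan_Suc: "double_fan (Suc r) = double_fan r \<union> (\<lambda>u. {r + 2, u}) ` {0, 1, r + 1}"
proof (cases r)
  case 0
  then show ?thesis by (auto simp: double_fan_def insert_commute)
next
  case Suc
  then have "{2..Suc r + 1} = insert (r + 2) {2..r + 1}" "{2..Suc r} = insert (r + 1) {2..r}"
    by auto
  then show ?thesis by (auto simp: double_fan_def insert_commute)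
qed

lemma double_fan_subset: "\<forall>e\<in>double_fan r. e \<subseteq> {..<r + 2}"
  by (auto simp: double_fan_def)

lemma card_double_fan_edge: "e \<in> double_fan r \<Longrightarrow> card e = 2"
  by (auto simp: double_fan_def)

lemma finite_double_fan: "finite (double_fan r)"
  by (simp add: double_fan_def)

lemma card_double_fan: "1 \<le> r \<Longrightarrow> card (double_fan r) = 3 * r"
proof (induction r rule: dec_induct)
  case base
  have "double_fan 1 = {{0, 1}, {0, 2}, {1, 2}}" by (auto simp: double_fan_def)
  then show ?case by (simp add: doubleton_eq_iff)
next
  case (step r)
  have "card (double_fan (Suc r)) = card (double_fan r) + card {0, 1, r + 1}"
    unfolding double_fan_Suc
    by (rule card_edges_insert_vertex[OF finite_double_fan _ double_fan_subset]) auto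
  then show ?case using step by simp
qed

lemma triangle_in_cliques_double_fan: "{0, 1, r + 1} \<in> cliques {..<r + 2} (double_fan r)"
  by (cases r) (auto simp: cliques_def double_fan_def insert_commute)

lemma card_cliques_double_fan:
  "card (cliques {..<r + 2} (double_fan r)) = (if r = 0 then 4 else 8 * r)"
proof (induction r)
  case 0
  have "cliques {..<2} (double_fan 0) = Pow {0, 1}"
    by (auto simp: cliques_def double_fan_def)
  then show ?case by (simp add: numeral_2_eq_2 card_Pow)
next
  case (Suc r)
  have vertices: "{..<Suc r + 2} = insert (r + 2) {..<r + 2}" by auto
  have "card (cliques {..<Suc r + 2} (double_fan (Suc r)))
      = card (cliques {..<r + 2} (double_fan r)) + 2 ^ card {0, 1, r + 1}"
    unfolding double_fan_Suc vertices
    by (rule card_cliques_insert_vertex[OF _ _ double_fan_subset triangle_in_cliques_double_fan])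
      auto
  then show ?case using Suc.IH by (cases r) auto
qed

lemma simple_graph_double_fan:
  assumes "r + 2 \<le> n"
  shows "simple_graph {..<n} (double_fan r)"
  unfolding simple_graph_def
proof (intro conjI ballI)
  fix e assume "e \<in> double_fan r"
  moreover from this have "e \<subseteq> {..<n}" using double_fan_subset assms by fastforce
  ultimately show "\<exists>u v. u \<in> {..<n} \<and> v \<in> {..<n} \<and> u \<noteq> v \<and> e = {u, v}"
    using card_double_fan_edge by (fastforce simp: card_2_iff)
qed simp

definition double_fan_pos :: "nat \<Rightarrow> complex" where
  "double_fan_pos k = (if k = 0 then \<i> else if k = 1 then -\<i> else of_nat k)"

text \<open>Inverse of the drawing on non-vertex points: the point \<open>(1 - u) i + u j\<close> of the
  spoke from \<open>i\<close> to \<open>j\<close> has \<open>Re z / (1 - Im z) = j\<close>, symmetrically for \<open>-i\<close>, and a point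
  strictly between \<open>j\<close> and \<open>j + 1\<close> has floor \<open>j\<close>.\<close>

definition double_fan_edge_at :: "complex \<Rightarrow> nat set" where
  "double_fan_edge_at z =
     (if Re z = 0 then {0, 1}
      else if Im z > 0 then {0, nat \<lfloor>Re z / (1 - Im z)\<rfloor>}
      else if Im z < 0 then {1, nat \<lfloor>Re z / (1 + Im z)\<rfloor>}
      else {nat \<lfloor>Re z\<rfloor>, Suc (nat \<lfloor>Re z\<rfloor>)})"

lemma double_fan_pos_simps [simp]:
  "double_fan_pos 0 = \<i>" "double_fan_pos (Suc 0) = -\<i>" "2 \<le> k \<Longrightarrow> double_fan_pos k = of_nat k"
  by (simp_all add: double_fan_pos_def)

lemma inj_double_fan_pos: "inj double_fan_pos"
proof (rule injI)
  fix k l assume "double_fan_pos k = double_fan_pos l"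
  then have "Re (double_fan_pos k) = Re (double_fan_pos l)"
    and "Im (double_fan_pos k) = Im (double_fan_pos l)"
    by simp_all
  then show "k = l" by (auto simp: double_fan_pos_def split: if_splits)
qed

lemma not_in_range_double_fan_pos:
  assumes "Im z \<noteq> 1" "Im z \<noteq> -1" "\<And>k. 2 \<le> k \<Longrightarrow> z \<noteq> of_nat k"
  shows "z \<notin> range double_fan_pos"
proof
  assume "z \<in> range double_fan_pos"
  then obtain k where "z = double_fan_pos k" by blast
  then show False using assms by (cases "k \<le> 1") (auto simp: double_fan_pos_def le_Suc_eq)
qed

lemma segment_points_hubs:
  assumes "z \<in> closed_segment \<i> (-\<i>)"
  shows "z \<in> {\<i>, -\<i>} \<or> (z \<notin> range double_fan_pos \<and> double_fan_edge_at z = {0, 1})"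
proof -
  obtain u :: real where u: "0 \<le> u" "u \<le> 1" "z = Complex 0 (1 - 2 * u)"
    using assms by (auto simp: in_segment complex_eq_iff)
  show ?thesis
  proof (cases "u = 0 \<or> u = 1")
    case True
    then show ?thesis using u by (auto simp: complex_eq_iff)
  next
    case False
    then have "z \<notin> range double_fan_pos"
      using u by (intro not_in_range_double_fan_pos) (auto simp: complex_eq_iff)
    then show ?thesis using u by (simp add: double_fan_edge_at_def)
  qed
qed

lemma segment_points_spoke:
  fixes j :: nat and s :: real
  assumes "2 \<le> j" "s = 1 \<or> s = -1" "z \<in> closed_segment (s *\<^sub>R \<i>) (of_nat j)"
  shows "z \<in> {s *\<^sub>R \<i>, of_nat j} \<or>
    (z \<notin> range double_fan_pos \<and> double_fan_edge_at z = {if s = 1 then 0 else 1, j})"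
proof -
  obtain u :: real where u: "0 \<le> u" "u \<le> 1" "z = Complex (u * j) (s * (1 - u))"
    using assms(3) by (auto simp: in_segment complex_eq_iff)
  show ?thesis
  proof (cases "u = 0 \<or> u = 1")
    case True
    then show ?thesis using u by (auto simp: complex_eq_iff scaleR_conv_of_real)
  next
    case False
    then have "z \<notin> range double_fan_pos"
      using u assms(2) by (intro not_in_range_double_fan_pos) (auto simp: complex_eq_iff)
    moreover have "Re z \<noteq> 0" "Re z / (1 - s * Im z) = j"
      using u False assms(1,2) by auto
    ultimately show ?thesis using u False assms(2)
      by (auto simp: double_fan_edge_at_def zero_less_mult_iff mult_less_0_iff)
  qed
qed

lemma segment_points_rim:
  fixes j :: nat
  assumes "2 \<le> j" "z \<in> closed_segment (of_nat j) (of_nat (Suc j))"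
  shows "z \<in> {of_nat j, of_nat (Suc j)} \<or>
    (z \<notin> range double_fan_pos \<and> double_fan_edge_at z = {j, Suc j})"
proof -
  obtain u :: real where u: "0 \<le> u" "u \<le> 1" "z = of_real (j + u)"
    using assms(2) by (auto simp: in_segment complex_eq_iff algebra_simps)
  show ?thesis
  proof (cases "u = 0 \<or> u = 1")
    case True
    then show ?thesis using u by auto
  next
    case False
    have "\<lfloor>j + u\<rfloor> = int j" using u False by (intro floor_unique) auto
    moreover have "z \<noteq> of_nat k" for k :: nat
    proof
      assume "z = of_nat k"
      then have "real k = j + u" using u by (simp add: complex_eq_iff)
      then have "j < k" "k < Suc j" using u False by linarith+
      then show False by simp
    qed
    then have "z \<notin> range double_fan_pos"
      using u by (intro not_in_range_double_fan_pos) auto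
    ultimately show ?thesis using u assms(1) by (simp add: double_fan_edge_at_def)
  qed
qed

lemma segment_points_double_fan:
  assumes "{u, v} \<in> double_fan r" "u < v" "z \<in> closed_segment (double_fan_pos u) (double_fan_pos v)"
  shows "z \<in> double_fan_pos ` {u, v} \<or> (z \<notin> range double_fan_pos \<and> double_fan_edge_at z = {u, v})"
proof -
  from assms(1,2) consider "u = 0" "v = 1" | "u = 0" "2 \<le> v" | "u = 1" "2 \<le> v" | "2 \<le> u" "v = Suc u"
    by (auto simp: double_fan_def doubleton_eq_iff)
  then show ?thesis
  proof cases
    case 1
    with assms(3) have "z \<in> closed_segment \<i> (-\<i>)" by simp
    from segment_points_hubs[OF this] show ?thesis using 1 by simp
  next
    case 2
    with assms(3) have "z \<in> closed_segment (1 *\<^sub>R \<i>) (of_nat v)" by simp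
    from segment_points_spoke[OF \<open>2 \<le> v\<close> _ this] show ?thesis using 2 by simp
  next
    case 3
    with assms(3) have "z \<in> closed_segment ((-1) *\<^sub>R \<i>) (of_nat v)" by simp
    from segment_points_spoke[OF \<open>2 \<le> v\<close> _ this] show ?thesis using 3 by simp
  next
    case 4
    with assms(3) have "z \<in> closed_segment (of_nat u) (of_nat (Suc u))" by simp
    from segment_points_rim[OF \<open>2 \<le> u\<close> this] show ?thesis using 4 by simp
  qed
qed

lemma planar_double_fan:
  assumes "r + 2 \<le> n"
  shows "planar_graph {..<n} (double_fan r)"
proof (rule planar_graph_straight_line[where edge_at = double_fan_edge_at])
  show "simple_graph {..<n} (double_fan r)" using assms by (rule simple_graph_double_fan)
  show "inj_on double_fan_pos {..<n}" using inj_double_fan_pos by (rule inj_on_subset) simp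
  fix u v z
  assume "{u, v} \<in> double_fan r" "u < v" "z \<in> closed_segment (double_fan_pos u) (double_fan_pos v)"
  then show "z \<in> double_fan_pos ` {u, v} \<or>
      (z \<notin> double_fan_pos ` {..<n} \<and> double_fan_edge_at z = {u, v})"
    using segment_points_double_fan by blast
qed

theorem proposition7:
  fixes n m :: nat
  assumes "n \<ge> 3" and "3 dvd m" and "3 \<le> m" and "m \<le> 3 * n - 6"
  shows "\<exists>(V :: nat set) (E :: nat set set).
           simple_graph V E \<and> planar_graph V E \<and> card V = n \<and> card E = m \<and>
           real (num_cliques V E) = real n + 7 / 3 * real m - 2"
proof -
  obtain r where m: "m = 3 * r" using assms(2) by blast
  have "1 \<le> r" "r + 2 \<le> n" using assms(1,3,4) m by linarith+
  have vertices: "{..<n} = {..<r + 2} \<union> {r + 2..<n}" using \<open>r + 2 \<le> n\<close> by auto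
  have "num_cliques {..<n} (double_fan r)
      = card (cliques {..<r + 2} (double_fan r)) + card {r + 2..<n}"
    unfolding num_cliques_def vertices
    by (rule card_cliques_union_isolated[OF _ _ _ double_fan_subset]) auto
  also have "\<dots> = 8 * r + (n - (r + 2))"
    using \<open>1 \<le> r\<close> unfolding card_cliques_double_fan by simp
  finally have "real (num_cliques {..<n} (double_fan r)) = real n + 7 / 3 * real m - 2"
    using \<open>r + 2 \<le> n\<close> m by simp
  then show ?thesis
    using simple_graph_double_fan planar_double_fan card_double_fan \<open>1 \<le> r\<close> \<open>r + 2 \<le> n\<close> m
    by (intro exI[of _ "{..<n}"] exI[of _ "double_fan r"]) auto
qed

end
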